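(* Let $\mathcal{A}$ be a unital $C^*$-algebra with unit $1_{\mathcal{A}}$ and let $S$ be the unilateral shift on $H_{\mathcal{A}}$ ($Se_k=e_{k+1}$, $k\in\mathbb{N}$). Then $1_{\mathcal{A}}\in\sigma^{\mathcal{A}}(S)$.
   Context: $H_{\mathcal{A}}=l_2(\mathcal{A})$ is the standard Hilbert $C^*$-module of sequences $(x_1,x_2,\dots)$ in $\mathcal{A}$ with $\sum_k x_k^*x_k$ norm-convergent, inner product $\langle x,y\rangle=\sum_k x_k^*y_k$; $\{e_k\}$ is its standard orthonormal basis. $B^a(H_{\mathcal{A}})$ denotes the bounded adjointable $\mathcal{A}$-linear operators on $H_{\mathcal{A}}$. For $\alpha\in\mathcal{A}$, $\alpha I$ is the operator $(x_k)\mapsto(\alpha x_k)$. For $F\in B^a(H_{\mathcal{A}})$, $\sigma^{\mathcal{A}}(F)=\{\alpha\in\mathcal{A}\mid F-\alpha I$ is not invertible in $B^a(H_{\mathcal{A}})\}$. *)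

theory Defs
  imports "HOL-Analysis.Analysis"
begin

text \<open>The unit satisfies norm 1 = 1 and 0 is different from 1 (non-trivial algebra).\<close>

class cstar_algebra = real_normed_algebra_1 + banach +
  fixes cscale :: "complex \<Rightarrow> 'a \<Rightarrow> 'a"
    and invol :: "'a \<Rightarrow> 'a"
  assumes cscale_add_right: "cscale c (x + y) = cscale c x + cscale c y"
    and cscale_add_left: "cscale (c + d) x = cscale c x + cscale d x"
    and cscale_mult_scalars: "cscale c (cscale d x) = cscale (c * d) x"
    and cscale_one: "cscale 1 x = x"
    and cscale_of_real: "cscale (complex_of_real r) x = scaleR r x"
    and cscale_mult_left: "cscale c (x * y) = cscale c x * y"
    and cscale_mult_right: "cscale c (x * y) = x * cscale c y"
    and norm_cscale: "norm (cscale c x) = cmod c * norm x"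
    and invol_invol: "invol (invol x) = x"
    and invol_add: "invol (x + y) = invol x + invol y"
    and invol_mult: "invol (x * y) = invol y * invol x"
    and invol_cscale: "invol (cscale c x) = cscale (cnj c) (invol x)"
    and cstar_identity: "norm (invol x * x) = norm x ^ 2"

text \<open>Elements are sequences indexed by nat (the index 0 plays the role of 1).\<close>

definition HA :: "(nat \<Rightarrow> 'a::cstar_algebra) set" where
  "HA = {x. summable (\<lambda>k. invol (x k) * x k)}"

definition HA_inner :: "(nat \<Rightarrow> 'a::cstar_algebra) \<Rightarrow> (nat \<Rightarrow> 'a) \<Rightarrow> 'a" where
  "HA_inner x y = (\<Sum>k. invol (x k) * y k)"

definition HA_norm :: "(nat \<Rightarrow> 'a::cstar_algebra) \<Rightarrow> real" where
  "HA_norm x = sqrt (norm (HA_inner x x))"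

definition std_basis :: "nat \<Rightarrow> nat \<Rightarrow> 'a::cstar_algebra" where
  "std_basis n = (\<lambda>k. if k = n then 1 else 0)"

text \<open>Operators are functions on sequences; only their behaviour on HA matters.
H_A is a right A-module: (x a)_k = x_k a.\<close>

definition bounded_adjointable :: "((nat \<Rightarrow> 'a::cstar_algebra) \<Rightarrow> (nat \<Rightarrow> 'a)) \<Rightarrow> bool" where
  "bounded_adjointable F \<longleftrightarrow>
     (\<forall>x\<in>HA. F x \<in> HA) \<and>
     (\<forall>x\<in>HA. \<forall>y\<in>HA. F (\<lambda>k. x k + y k) = (\<lambda>k. F x k + F y k)) \<and>
     (\<forall>x\<in>HA. \<forall>a. F (\<lambda>k. x k * a) = (\<lambda>k. F x k * a)) \<and>
     (\<exists>C. \<forall>x\<in>HA. HA_norm (F x) \<le> C * HA_norm x) \<and>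
     (\<exists>G. (\<forall>y\<in>HA. G y \<in> HA) \<and> (\<forall>x\<in>HA. \<forall>y\<in>HA. HA_inner (F x) y = HA_inner x (G y)))"

definition invertible_Ba :: "((nat \<Rightarrow> 'a::cstar_algebra) \<Rightarrow> (nat \<Rightarrow> 'a)) \<Rightarrow> bool" where
  "invertible_Ba F \<longleftrightarrow>
     (\<exists>G. bounded_adjointable G \<and> (\<forall>x\<in>HA. G (F x) = x \<and> F (G x) = x))"

definition scal_op :: "'a::cstar_algebra \<Rightarrow> (nat \<Rightarrow> 'a) \<Rightarrow> (nat \<Rightarrow> 'a)" where
  "scal_op \<alpha> x = (\<lambda>k. \<alpha> * x k)"

definition A_spectrum :: "((nat \<Rightarrow> 'a::cstar_algebra) \<Rightarrow> (nat \<Rightarrow> 'a)) \<Rightarrow> 'a set" where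
  "A_spectrum F = {\<alpha>. \<not> invertible_Ba (\<lambda>x. (\<lambda>k. F x k - scal_op \<alpha> x k))}"

definition unilateral_shift :: "(nat \<Rightarrow> 'a::cstar_algebra) \<Rightarrow> (nat \<Rightarrow> 'a)" where
  "unilateral_shift x = (\<lambda>k. if k = 0 then 0 else x (k - 1))"

lemma unilateral_shift_basis: "unilateral_shift (std_basis n) = std_basis (Suc n)"
  by (auto simp: unilateral_shift_def std_basis_def fun_eq_iff)

end

theory Submission
  imports Defs
begin

text \<open>If \<open>S - I\<close> were invertible, some \<open>y \<in> H\<^sub>A\<close> would solve \<open>(S - I) y = e\<^sub>0\<close>.
  Comparing coordinates gives \<open>y\<^sub>0 = -1\<close> and \<open>y\<^sub>k\<^sub>+\<^sub>1 = y\<^sub>k\<close>, so \<open>y\<close> is the constant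
  sequence \<open>-1\<close>; but by the C*-identity the coordinates of an element of \<open>H\<^sub>A\<close>
  tend to \<open>0\<close>.\<close>

lemma invol_zero: "invol (0::'a::cstar_algebra) = 0"
  using invol_add[of "0::'a" 0] by simp

lemma std_basis_in_HA: "std_basis n \<in> HA"
  unfolding HA_def std_basis_def mem_Collect_eq
  by (rule summable_finite[of "{n}"]) (auto simp: invol_zero)

lemma HA_LIMSEQ_zero:
  assumes "x \<in> HA"
  shows "x \<longlonglongrightarrow> 0"
proof -
  have "(\<lambda>k. invol (x k) * x k) \<longlonglongrightarrow> 0"
    using assms unfolding HA_def by (simp add: summable_LIMSEQ_zero)
  then have "(\<lambda>k. norm (x k) ^ 2) \<longlonglongrightarrow> 0"
    using tendsto_norm_zero by (fastforce simp: cstar_identity)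
  then have "(\<lambda>k. sqrt (norm (x k) ^ 2)) \<longlonglongrightarrow> 0"
    using tendsto_real_sqrt by fastforce
  then show ?thesis
    by (simp add: tendsto_norm_zero_cancel)
qed

lemma invertible_Ba_surj_HA:
  assumes "invertible_Ba F" and "x \<in> HA"
  obtains y where "y \<in> HA" and "F y = x"
  using assms unfolding invertible_Ba_def bounded_adjointable_def by metis

lemma shift_minus_id_eq_basis_zero:
  assumes "(\<lambda>k. unilateral_shift y k - y k) = std_basis 0"
  shows "y = (\<lambda>_. - 1)"
proof
  fix n
  have y0: "y 0 = - 1"
    using fun_cong[OF assms, of 0]
    by (simp add: unilateral_shift_def std_basis_def minus_equation_iff)
  have y_Suc: "y (Suc k) = y k" for k
    using fun_cong[OF assms, of "Suc k"] by (simp add: unilateral_shift_def std_basis_def)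
  show "y n = - 1"
    by (induction n) (simp_all add: y0 y_Suc)
qed

theorem corollary2p5:
  shows "(1::'a::cstar_algebra) \<in> A_spectrum (unilateral_shift :: (nat \<Rightarrow> 'a) \<Rightarrow> (nat \<Rightarrow> 'a))"
proof -
  have "\<not> invertible_Ba (\<lambda>x. (\<lambda>k. unilateral_shift x k - scal_op (1::'a) x k))"
  proof
    assume "invertible_Ba (\<lambda>x. (\<lambda>k. unilateral_shift x k - scal_op (1::'a) x k))"
    then obtain y :: "nat \<Rightarrow> 'a" where "y \<in> HA"
      and "(\<lambda>k. unilateral_shift y k - y k) = std_basis 0"
      using std_basis_in_HA by (auto simp: scal_op_def elim: invertible_Ba_surj_HA)
    then have "(\<lambda>_. - 1 :: 'a) \<longlonglongrightarrow> 0"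
      using HA_LIMSEQ_zero[of y] shift_minus_id_eq_basis_zero[of y] by simp
    then show False
      by (simp add: LIMSEQ_const_iff)
  qed
  then show ?thesis
    unfolding A_spectrum_def by simp
qed

end
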